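(* Let $V$ be a vertex algebra, $g$ an automorphism of $V$ of finite order $T$, and $n,m\in(1/T)\mathbb{N}$. Then the quotient space $\tilde{A}_{g,n,m}(V)=V/\tilde{O}_{g,n,m}(V)$ is an $\tilde{A}_{g,n}(V)$–$\tilde{A}_{g,m}(V)$-bimodule, where the left action is well defined by $(u+\tilde{O}_{g,n}(V))\cdot(w+\tilde{O}_{g,n,m}(V))=u\,\bar{\bullet}_{g,m}^{\,n}\,w+\tilde{O}_{g,n,m}(V)$ and the right action is well defined by $(w+\tilde{O}_{g,n,m}(V))\cdot(v+\tilde{O}_{g,m}(V))=w\bullet_{g,m}^{\,n}v+\tilde{O}_{g,n,m}(V)$, for $u,v,w\in V$.
   Context: $V$ is a vertex algebra with vacuum $\mathbf{1}$, vertex operator $Y(v,x)=\sum_{k\in\mathbb Z}v_kx^{-k-1}$ and $\mathcal{D}v=v_{-2}\mathbf 1$. $g$ is an automorphism ($g\mathbf 1=\mathbf 1$, $gY(u,x)v=Y(gu,x)gv$) with $g^T=1$, and $V=\bigoplus_{r=0}^{T-1}V^r$, $V^r=\{v: gv=e^{-2\pi\sqrt{-1}r/T}v\}$. For $k,l\in\{0,\dots,T-1\}$ let $\delta_k(l)=1$ if $k\ge l$, $\delta_k(l)=0$ if $k<l$, and $\delta_k(T)=0$. Every $n\in(1/T)\mathbb Z$ is written uniquely $n=\lfloor n\rfloor+\bar n/T$ with $\bar n\in\{0,\dots,T-1\}$. Powers $(1+y)^\alpha$ are expanded as binomial series in nonnegative powers of $y$, and $Y(u,\log(1+y))v$ denotes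 $Y(u,x)v\in V((x))$ with $x=\log(1+y)=\sum_{k\ge1}(-1)^{k-1}y^k/k$ substituted. For $u\in V^r$, $v\in V$, $m,n,p\in(1/T)\mathbb N$ with $\bar p-\bar n\equiv r\pmod T$ define $u\bullet_{g,m,p}^{\,n}v=\sum_{i=0}^{\lfloor p\rfloor}(-1)^i\binom{\lfloor m\rfloor+\lfloor n\rfloor-\lfloor p\rfloor-1+\delta_{\bar m}(r)+\delta_{\bar n}(T-r)+i}{i}\operatorname{Res}_y\frac{(1+y)^{-1+\lfloor m\rfloor+\delta_{\bar m}(r)+r/T}}{y^{\lfloor m\rfloor+\lfloor n\rfloor-\lfloor p\rfloor+\delta_{\bar m}(r)+\delta_{\bar n}(T-r)+i}}Y(u,\log(1+y))v,$ and $u\bullet_{g,m,p}^{\,n}v=0$ if $\bar p-\bar n\not\equiv r\pmod T$; extend bilinearly. Put $\bar\bullet_{g,m}^{\,n}=\bullet_{g,m,n}^{\,n}$, $\bullet_{g,m}^{\,n}=\bullet_{g,m,m}^{\,n}$, $\bullet_{g,n}=\bullet_{g,n,n}^{\,n}$. For $u\in V^r,v\in V$: $u\diamond_{g,m}^{\,n}v=\operatorname{Res}_y\frac{(1+y)^{-1+\delta_{\bar m}(r)+\lfloor m\rfloor+r/T}}{y^{\lfloor m\rfloor+\lfloor n\rfloor+\delta_{\bar m}(r)+\delta_{\bar n}(T-r)+1}}Y(u,\log(1+y))v$ (extended bilinearly). Let $L_{n,m}(V)=\mathrm{span}\{(\mathcal D+m-n)u:u\in V\}$ and $\tilde O'_{g,n,m}(V)=\mathrm{span}\{u\diamond_{g,m}^{\,n}v:u,v\in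 V\}+L_{n,m}(V)$. Let $\tilde O''_{g,n,m}(V)$ be the span of all $u\bullet_{g,m,p_3}^{\,n}\big((a\bullet_{g,p_1,p_2}^{\,p_3}b)\bullet_{g,m,p_1}^{\,p_3}c-a\bullet_{g,m,p_2}^{\,p_3}(b\bullet_{g,m,p_1}^{\,p_2}c)\big)$ with $a,b,c,u\in V$, $p_1,p_2,p_3\in(1/T)\mathbb N$; let $\tilde O'''_{g,n,m}(V)=\sum_{p_1,p_2\in(1/T)\mathbb N}\big(V\bullet_{g,p_1,p_2}^{\,n}\tilde O'_{g,p_2,p_1}(V)\big)\bullet_{g,m,p_1}^{\,n}V$ (spans of such products); and $\tilde O_{g,n,m}(V)=\tilde O'_{g,n,m}(V)+\tilde O''_{g,n,m}(V)+\tilde O'''_{g,n,m}(V)$. Finally $\tilde O_{g,n}(V)=\tilde O'_{g,n,n}(V)$ and $\tilde A_{g,n}(V)=V/\tilde O_{g,n}(V)$, which is an associative algebra with product induced by $\bullet_{g,n}$ and unit $\mathbf 1+\tilde O_{g,n}(V)$. *)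

theory Defs
  imports "HOL-Analysis.Analysis" "HOL-Library.Groups_Big_Fun"
    "HOL-Computational_Algebra.Formal_Laurent_Series"
begin

text \<open>A vertex algebra is given by a complex vector space 'v (scalar multiplication sm),
  the modes mode u k v = u_k v of the vertex operator Y(u,x) v = sum_k u_k v x^(-k-1),
  and the vacuum vac. Axioms: bilinearity, truncation (Y(u,x)v in V((x))), vacuum axioms
  and the Jacobi identity in its equivalent Borcherds-identity form (componentwise).\<close>

definition vertex_algebra ::
  "(complex \<Rightarrow> 'v::ab_group_add \<Rightarrow> 'v) \<Rightarrow> ('v \<Rightarrow> int \<Rightarrow> 'v \<Rightarrow> 'v) \<Rightarrow> 'v \<Rightarrow> bool" where
  "vertex_algebra sm mode vac \<longleftrightarrow>
     Vector_Spaces.vector_space sm \<and>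
     (\<forall>k v. Vector_Spaces.linear sm sm (\<lambda>u. mode u k v)) \<and>
     (\<forall>u k. Vector_Spaces.linear sm sm (\<lambda>v. mode u k v)) \<and>
     (\<forall>u v. \<exists>N. \<forall>k\<ge>N. mode u k v = 0) \<and>
     (\<forall>k v. mode vac k v = (if k = -1 then v else 0)) \<and>
     (\<forall>u. mode u (-1) vac = u) \<and>
     (\<forall>u k. k \<ge> 0 \<longrightarrow> mode u k vac = 0) \<and>
     (\<forall>u v w p q r.
        Sum_any (\<lambda>i::nat. sm ((of_int p :: complex) gchoose i)
                    (mode (mode u (r + int i) v) (p + q - int i) w))
      = Sum_any (\<lambda>i::nat. sm ((-1) ^ i * ((of_int r :: complex) gchoose i))
                    (mode u (p + r - int i) (mode v (q + int i) w)
                     - sm ((-1) powi r) (mode v (q + r - int i) (mode u (p + int i) w)))))"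

definition va_automorphism ::
  "(complex \<Rightarrow> 'v::ab_group_add \<Rightarrow> 'v) \<Rightarrow> ('v \<Rightarrow> int \<Rightarrow> 'v \<Rightarrow> 'v) \<Rightarrow> 'v \<Rightarrow> ('v \<Rightarrow> 'v) \<Rightarrow> nat \<Rightarrow> bool" where
  "va_automorphism sm mode vac g T \<longleftrightarrow>
     Vector_Spaces.linear sm sm g \<and> bij g \<and> g vac = vac \<and>
     (\<forall>u k v. g (mode u k v) = mode (g u) k (g v)) \<and>
     T > 0 \<and> g ^^ T = id"

text \<open>Projection of V onto the eigenspace V^r = {v. g v = exp(-2 pi i r/T) v}.\<close>

definition proj ::
  "(complex \<Rightarrow> 'v::ab_group_add \<Rightarrow> 'v) \<Rightarrow> ('v \<Rightarrow> 'v) \<Rightarrow> nat \<Rightarrow> nat \<Rightarrow> 'v \<Rightarrow> 'v" where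
  "proj sm g T r u =
     sm (1 / of_nat T)
       (\<Sum>j<T. sm (exp (2 * of_real pi * \<i> * of_nat j * of_nat r / of_nat T)) ((g ^^ j) u))"

definition delta :: "nat \<Rightarrow> nat \<Rightarrow> int" where
  "delta k l = (if l \<le> k then 1 else 0)"

text \<open>resY alpha K u v = Res_y (1+y)^alpha / y^K * Y(u, log(1+y)) v, computed termwise:
  the coefficient of u_k v is the residue of (1+y)^alpha (log(1+y))^(-k-1) y^(-K)
  as a formal Laurent series; only finitely many terms are nonzero.\<close>

definition resY ::
  "(complex \<Rightarrow> 'v::ab_group_add \<Rightarrow> 'v) \<Rightarrow> ('v \<Rightarrow> int \<Rightarrow> 'v \<Rightarrow> 'v) \<Rightarrow> complex \<Rightarrow> int \<Rightarrow> 'v \<Rightarrow> 'v \<Rightarrow> 'v" where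
  "resY sm mode alpha K u v =
     Sum_any (\<lambda>k::int. sm
        (fls_residue (fps_to_fls (fps_binomial alpha)
                      * (fps_to_fls (fps_ln 1)) powi (- k - 1)
                      * fls_X_intpow (- K)))
        (mode u k v))"

text \<open>Elements of (1/T)N are represented by their numerators: the natural number M stands for
  m = M/T, so floor m = M div T and bar m = M mod T.\<close>

text \<open>u bullet_{g,m,p}^n v for u in V^r (homogeneous case); arguments M P N.\<close>

definition bullet_hom ::
  "(complex \<Rightarrow> 'v::ab_group_add \<Rightarrow> 'v) \<Rightarrow> ('v \<Rightarrow> int \<Rightarrow> 'v \<Rightarrow> 'v) \<Rightarrow> nat \<Rightarrow> nat
   \<Rightarrow> nat \<Rightarrow> nat \<Rightarrow> nat \<Rightarrow> 'v \<Rightarrow> 'v \<Rightarrow> 'v" where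
  "bullet_hom sm mode T r M P N u v =
     (let fm = int (M div T); fn = int (N div T); fp = int (P div T);
          dm = delta (M mod T) r; dn = delta (N mod T) (T - r)
      in if (int (P mod T) - int (N mod T)) mod int T = int r mod int T then
           (\<Sum>i\<in>{0..P div T}.
              sm ((-1) ^ i * ((of_int (fm + fn - fp - 1 + dm + dn + int i) :: complex) gchoose i))
                (resY sm mode (-1 + of_int fm + of_int dm + of_nat r / of_nat T)
                   (fm + fn - fp + dm + dn + int i) u v))
         else 0)"

text \<open>Bilinear extension: bullet M P N u v = u bullet_{g,m,p}^n v.\<close>

definition bullet ::
  "(complex \<Rightarrow> 'v::ab_group_add \<Rightarrow> 'v) \<Rightarrow> ('v \<Rightarrow> int \<Rightarrow> 'v \<Rightarrow> 'v) \<Rightarrow> ('v \<Rightarrow> 'v) \<Rightarrow> nat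
   \<Rightarrow> nat \<Rightarrow> nat \<Rightarrow> nat \<Rightarrow> 'v \<Rightarrow> 'v \<Rightarrow> 'v" where
  "bullet sm mode g T M P N u v =
     (\<Sum>r<T. bullet_hom sm mode T r M P N (proj sm g T r u) v)"

text \<open>u diamond_{g,m}^n v; arguments M N.\<close>

definition diamond_hom ::
  "(complex \<Rightarrow> 'v::ab_group_add \<Rightarrow> 'v) \<Rightarrow> ('v \<Rightarrow> int \<Rightarrow> 'v \<Rightarrow> 'v) \<Rightarrow> nat
   \<Rightarrow> nat \<Rightarrow> nat \<Rightarrow> nat \<Rightarrow> 'v \<Rightarrow> 'v \<Rightarrow> 'v" where
  "diamond_hom sm mode T r M N u v =
     (let fm = int (M div T); fn = int (N div T);
          dm = delta (M mod T) r; dn = delta (N mod T) (T - r)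
      in resY sm mode (-1 + of_int dm + of_int fm + of_nat r / of_nat T)
           (fm + fn + dm + dn + 1) u v)"

definition diamond ::
  "(complex \<Rightarrow> 'v::ab_group_add \<Rightarrow> 'v) \<Rightarrow> ('v \<Rightarrow> int \<Rightarrow> 'v \<Rightarrow> 'v) \<Rightarrow> ('v \<Rightarrow> 'v) \<Rightarrow> nat
   \<Rightarrow> nat \<Rightarrow> nat \<Rightarrow> 'v \<Rightarrow> 'v \<Rightarrow> 'v" where
  "diamond sm mode g T M N u v =
     (\<Sum>r<T. diamond_hom sm mode T r M N (proj sm g T r u) v)"

text \<open>L_{n,m}(V) = span{(D + m - n) u}, with D u = u_{-2} vac.\<close>

definition Lnm ::
  "(complex \<Rightarrow> 'v::ab_group_add \<Rightarrow> 'v) \<Rightarrow> ('v \<Rightarrow> int \<Rightarrow> 'v \<Rightarrow> 'v) \<Rightarrow> 'v \<Rightarrow> nat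
   \<Rightarrow> nat \<Rightarrow> nat \<Rightarrow> 'v set" where
  "Lnm sm mode vac T N M =
     module.span sm
       {mode u (-2) vac + sm ((of_nat M - of_nat N) / of_nat T) u | u. True}"

definition O1 ::
  "(complex \<Rightarrow> 'v::ab_group_add \<Rightarrow> 'v) \<Rightarrow> ('v \<Rightarrow> int \<Rightarrow> 'v \<Rightarrow> 'v) \<Rightarrow> 'v \<Rightarrow> ('v \<Rightarrow> 'v)
   \<Rightarrow> nat \<Rightarrow> nat \<Rightarrow> nat \<Rightarrow> 'v set" where
  "O1 sm mode vac g T N M =
     {x + y | x y. x \<in> module.span sm {diamond sm mode g T M N u v | u v. True}
                 \<and> y \<in> Lnm sm mode vac T N M}"

definition O2 ::
  "(complex \<Rightarrow> 'v::ab_group_add \<Rightarrow> 'v) \<Rightarrow> ('v \<Rightarrow> int \<Rightarrow> 'v \<Rightarrow> 'v) \<Rightarrow> ('v \<Rightarrow> 'v)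
   \<Rightarrow> nat \<Rightarrow> nat \<Rightarrow> nat \<Rightarrow> 'v set" where
  "O2 sm mode g T N M =
     module.span sm
       {bullet sm mode g T M P3 N u
          (bullet sm mode g T M P1 P3 (bullet sm mode g T P1 P2 P3 a b) c
           - bullet sm mode g T M P2 P3 a (bullet sm mode g T M P1 P2 b c))
        | u a b c P1 P2 P3. True}"

definition O3 ::
  "(complex \<Rightarrow> 'v::ab_group_add \<Rightarrow> 'v) \<Rightarrow> ('v \<Rightarrow> int \<Rightarrow> 'v \<Rightarrow> 'v) \<Rightarrow> 'v \<Rightarrow> ('v \<Rightarrow> 'v)
   \<Rightarrow> nat \<Rightarrow> nat \<Rightarrow> nat \<Rightarrow> 'v set" where
  "O3 sm mode vac g T N M =
     module.span sm
       {bullet sm mode g T M P1 N (bullet sm mode g T P1 P2 N a x) b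
        | a b x P1 P2. x \<in> O1 sm mode vac g T P2 P1}"

definition Onm ::
  "(complex \<Rightarrow> 'v::ab_group_add \<Rightarrow> 'v) \<Rightarrow> ('v \<Rightarrow> int \<Rightarrow> 'v \<Rightarrow> 'v) \<Rightarrow> 'v \<Rightarrow> ('v \<Rightarrow> 'v)
   \<Rightarrow> nat \<Rightarrow> nat \<Rightarrow> nat \<Rightarrow> 'v set" where
  "Onm sm mode vac g T N M =
     {x + y + z | x y z. x \<in> O1 sm mode vac g T N M \<and> y \<in> O2 sm mode g T N M
                         \<and> z \<in> O3 sm mode vac g T N M}"

definition On ::
  "(complex \<Rightarrow> 'v::ab_group_add \<Rightarrow> 'v) \<Rightarrow> ('v \<Rightarrow> int \<Rightarrow> 'v \<Rightarrow> 'v) \<Rightarrow> 'v \<Rightarrow> ('v \<Rightarrow> 'v)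
   \<Rightarrow> nat \<Rightarrow> nat \<Rightarrow> 'v set" where
  "On sm mode vac g T N = O1 sm mode vac g T N N"

end

theory Submission
  imports Defs
begin

text \<open>
  Linearity is inherited from the vertex operator, so everything reduces to identities modulo
  \<open>O_{g,n,m}(V)\<close>. Associativity holds there by construction: \<open>O''\<close> contains every
  associator, because \<open>vac\<close> is an exact left unit of every product. Right multiplication by
  \<open>vac\<close> is the identity modulo \<open>O_{g,n,m}(V)\<close>: since \<open>Y(x, z) vac = e^(z D) x\<close> and
  \<open>D = n - m\<close> modulo \<open>L_{n,m}(V)\<close>, the residue defining the product of \<open>x \<in> V^r\<close> with
  \<open>vac\<close> reduces to a binomial coefficient of \<open>(1 + y)^(a + n - m)\<close> times \<open>x\<close>. In the
  residue classes \<open>r\<close> allowed by the product the coefficients add up to \<open>1\<close>; in the others the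
  same computation for \<open>x \<diamond> vac\<close> gives a nonzero multiple of \<open>x\<close>, so \<open>x \<in> O'\<close>.
  Closure under both actions then follows generator by generator, by rebracketing with
  associators and inserting the right unit.
\<close>

section \<open>The binomial series and the logarithm\<close>

lemma fps_exp_compose_ln: "fps_exp (c::'a::field_char_0) oo fps_ln 1 = fps_binomial c"
proof -
  let ?a = "fps_exp c oo fps_ln 1"
  have "fps_deriv ?a = fps_const c * ?a * inverse (1 + fps_X)"
    by (simp add: fps_compose_deriv fps_ln_deriv fps_const_mult_apply_left[symmetric] mult.assoc)
  then have "fps_deriv ?a = fps_const c * ?a / (1 + fps_X)"
    by (simp add: fps_divide_unit)
  moreover have "?a $ 0 = 1" by simp
  ultimately show ?thesis using fps_binomial_ODE_unique' by blast
qed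

lemma fps_ln_power_nth_below: "m < j \<Longrightarrow> (fps_ln (1::'a::field_char_0) ^ j) $ m = 0"
  by (simp add: startsby_zero_power_prefix)

lemma fps_binomial_times_ln_power_nth_below:
  "m < j \<Longrightarrow> (fps_binomial a * fps_ln (1::'a::field_char_0) ^ j) $ m = 0"
  by (simp add: fps_mult_nth fps_ln_power_nth_below)

lemma fps_exp_compose_ln_nth:
  assumes "m \<le> n"
  shows "(fps_exp (c::'a::field_char_0) oo fps_ln 1) $ m = (\<Sum>j=0..n. c^j / fact j * (fps_ln 1 ^ j) $ m)"
proof -
  have "(fps_exp c oo fps_ln 1) $ m = (\<Sum>j=0..m. c^j / fact j * (fps_ln 1 ^ j) $ m)"
    by (simp add: fps_compose_nth)
  also have "\<dots> = (\<Sum>j=0..n. c^j / fact j * (fps_ln 1 ^ j) $ m)"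
    using assms by (intro sum.mono_neutral_left) (auto simp: fps_ln_power_nth_below)
  finally show ?thesis .
qed

text \<open>Coefficientwise, this is \<open>(1 + y)^a * exp (c * log (1 + y)) = (1 + y)^(a + c)\<close>.\<close>

lemma gbinomial_add_eq_sum_ln_powers:
  "(a + c) gchoose n = (\<Sum>j=0..n. c^j / fact j * (fps_binomial a * fps_ln 1 ^ j) $ n)"
  for a c :: "'a::field_char_0"
proof -
  have "(a + c) gchoose n = (fps_binomial a * (fps_exp c oo fps_ln 1)) $ n"
    by (simp add: fps_exp_compose_ln fps_binomial_add_mult[symmetric])
  also have "\<dots> = (\<Sum>i=0..n. fps_binomial a $ i * (\<Sum>j=0..n. c^j / fact j * (fps_ln 1 ^ j) $ (n - i)))"
    by (simp add: fps_mult_nth fps_exp_compose_ln_nth[of _ n])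
  also have "\<dots> = (\<Sum>j=0..n. c^j / fact j * (\<Sum>i=0..n. fps_binomial a $ i * (fps_ln 1 ^ j) $ (n - i)))"
    unfolding sum_distrib_left by (subst sum.swap) (simp add: mult.left_commute)
  also have "\<dots> = (\<Sum>j=0..n. c^j / fact j * (fps_binomial a * fps_ln 1 ^ j) $ n)"
    by (simp add: fps_mult_nth)
  finally show ?thesis .
qed

definition res_coeff :: "complex \<Rightarrow> int \<Rightarrow> int \<Rightarrow> complex" where
  "res_coeff a K k = fls_residue (fps_to_fls (fps_binomial a)
                      * (fps_to_fls (fps_ln 1)) powi (- k - 1) * fls_X_intpow (- K))"

lemma res_coeff_neg:
  "res_coeff a K (- int j - 1) = (if 1 \<le> K then (fps_binomial a * fps_ln 1 ^ j) $ nat (K - 1) else 0)"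
proof -
  have "res_coeff a K (- int j - 1)
      = fls_residue (fps_to_fls (fps_binomial a * fps_ln 1 ^ j) * fls_X_intpow (- K))"
    unfolding res_coeff_def by (simp add: power_int_of_nat fls_times_fps_to_fls fps_to_fls_power)
  also have "\<dots> = fls_nth (fps_to_fls (fps_binomial a * fps_ln 1 ^ j)) (K - 1)"
    by (simp only: fls_X_intpow_times_conv_shift fls_residue_def fls_shift_nth) simp
  finally show ?thesis by simp
qed

lemma res_coeff_minus_one: "res_coeff a K (-1) = (if 1 \<le> K then a gchoose nat (K - 1) else 0)"
  using res_coeff_neg[of a K 0] by simp

lemma res_coeff_eq_0: "k < min 0 (- K) \<Longrightarrow> res_coeff a K k = 0"
  using res_coeff_neg[of a K "nat (- k - 1)"]
  by (simp add: fps_binomial_times_ln_power_nth_below)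

definition root_unity :: "nat \<Rightarrow> nat \<Rightarrow> complex" where
  "root_unity T j = exp (2 * of_real pi * \<i> * of_nat j / of_nat T)"

lemma root_unity_add: "root_unity T (a + b) = root_unity T a * root_unity T b"
  unfolding root_unity_def by (simp add: exp_add[symmetric] add_divide_distrib distrib_left)

lemma root_unity_mult: "root_unity T (a * b) = root_unity T a ^ b"
  unfolding root_unity_def by (simp add: exp_of_nat_mult[symmetric] mult_ac)

lemma root_unity_commute: "root_unity T a ^ b = root_unity T b ^ a"
  by (metis root_unity_mult mult.commute)

lemma root_unity_self: "T > 0 \<Longrightarrow> root_unity T T = 1"
  unfolding root_unity_def by simp

lemma root_unity_power_self: "T > 0 \<Longrightarrow> root_unity T j ^ T = 1"
  by (metis root_unity_commute root_unity_self power_one)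

lemma root_unity_eq_1_iff: "T > 0 \<Longrightarrow> root_unity T j = 1 \<longleftrightarrow> T dvd j"
  unfolding root_unity_def using complex_root_unity_eq_1[of T j] by simp

lemma sum_root_unity_powers:
  assumes "T > 0"
  shows "(\<Sum>i<T. root_unity T j ^ i) = (if T dvd j then of_nat T else 0)"
  using assms root_unity_eq_1_iff[OF assms, of j] root_unity_power_self[OF assms, of j]
  by (simp add: sum_gp_strict)

lemma dvd_add_diff_iff_eq:
  fixes r r' T :: nat
  assumes "r < T" "r' < T"
  shows "T dvd (r' + T - r) \<longleftrightarrow> r' = r"
proof
  assume "T dvd (r' + T - r)"
  then obtain q where q: "r' + T - r = T * q" by (auto simp: dvd_def)
  with assms have "0 < T * q" "T * q < T * 2" by linarith+
  then have "q = 1" by simp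
  with q assms show "r' = r" by simp
qed simp

lemma sum_shift_periodic:
  fixes f :: "nat \<Rightarrow> 'a::ab_group_add"
  assumes "f n = f 0"
  shows "(\<Sum>j<n. f (Suc j)) = (\<Sum>j<n. f j)"
  using sum.lessThan_Suc_shift[of f n] sum.lessThan_Suc[of f n] assms by (simp add: add.commute)

lemma residue_class_delta:
  fixes T r a b :: nat
  assumes "r < T" "a < T" "b < T" "(int a - int b) mod int T = int r mod int T"
  shows "int r + int b - int a = int T * delta b (T - r) \<and> delta a r + delta b (T - r) \<ge> 1"
proof (cases "b \<le> a")
  case True
  have "(int a - int b) mod int T = int a - int b"
    using True assms(2) by (intro mod_pos_pos_trivial) linarith+
  then have "int a - int b = int r" using assms(1,4) by simp
  then show ?thesis using assms(1,2) by (auto simp: delta_def)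
next
  case False
  have "(int a - int b) mod int T = (int a - int b + int T) mod int T" by simp
  also have "\<dots> = int a - int b + int T"
    using False assms(3) by (intro mod_pos_pos_trivial) linarith+
  finally have "int a - int b + int T = int r" using assms(1,4) by simp
  then show ?thesis using assms(1) by (auto simp: delta_def)
qed

lemma residue_class_of_multiple:
  fixes T r M N :: nat and z :: int
  assumes "int r + int N - int M = int T * z"
  shows "(int (M mod T) - int (N mod T)) mod int T = int r mod int T"
proof -
  have "(int (M mod T) - int (N mod T)) mod int T = (int M - int N) mod int T"
    by (simp add: zmod_int mod_diff_eq)
  also have "int M - int N = int r + int T * (- z)" using assms by (simp add: algebra_simps)
  also have "(int r + int T * (- z)) mod int T = int r mod int T" by (rule mod_mult_self2)
  finally show ?thesis .
qed

lemma int_div_mod_decomp: "int n = int d * int (n div d) + int (n mod d)"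
  by (metis div_mult_mod_eq of_nat_add of_nat_mult mult.commute)

lemma gbinomial_nonzero_if_not_int:
  fixes a :: "'a::field_char_0"
  assumes "a \<notin> \<int>"
  shows "a gchoose k \<noteq> 0"
proof
  assume "a gchoose k = 0"
  then obtain j where "a - of_nat k + 1 = - of_nat j"
    by (auto simp: gbinomial_pochhammer' pochhammer_eq_0_iff)
  then have "a = of_int (int k - 1 - int j)" by (simp add: algebra_simps)
  with assms show False by auto
qed

lemma Sum_any_eq_sum_atLeastLessThan:
  fixes f :: "int \<Rightarrow> 'a::comm_monoid_add"
  assumes "\<And>k. k < L \<Longrightarrow> f k = 0" and "\<And>k. N \<le> k \<Longrightarrow> f k = 0"
  shows "Sum_any f = (\<Sum>k=L..<N. f k)"
proof (rule Sum_any.expand_superset)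
  show "{k. f k \<noteq> 0} \<subseteq> {L..<N}"
    using assms by (force simp: not_less[symmetric])
qed simp

context vector_space_pair
begin

lemma linear_Sum_any_scaled:
  fixes \<phi> :: "int \<Rightarrow> 'b \<Rightarrow> 'c" and c :: "int \<Rightarrow> 'a"
  assumes lin: "\<And>k. Vector_Spaces.linear s1 s2 (\<phi> k)"
    and trunc: "\<And>x. \<exists>N. \<forall>k\<ge>N. \<phi> k x = 0"
    and c: "\<And>k. k < L \<Longrightarrow> c k = 0"
  shows "Vector_Spaces.linear s1 s2 (\<lambda>x. Sum_any (\<lambda>k. c k *b \<phi> k x))"
proof -
  have sum_eq: "Sum_any (\<lambda>k. c k *b \<phi> k x) = (\<Sum>k=L..<N. c k *b \<phi> k x)"
    if "\<forall>k\<ge>N. \<phi> k x = 0" for x N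
    using that c by (intro Sum_any_eq_sum_atLeastLessThan) auto
  show ?thesis
    unfolding Vector_Spaces.linear_iff
  proof (intro conjI allI vs1.vector_space_axioms vs2.vector_space_axioms)
    fix x y
    obtain Nx Ny where "\<forall>k\<ge>Nx. \<phi> k x = 0" "\<forall>k\<ge>Ny. \<phi> k y = 0" using trunc by meson
    then have N: "\<forall>k\<ge>max Nx Ny. \<phi> k x = 0" "\<forall>k\<ge>max Nx Ny. \<phi> k y = 0"
      "\<forall>k\<ge>max Nx Ny. \<phi> k (x + y) = 0"
      by (simp_all add: linear_add[OF lin])
    show "Sum_any (\<lambda>k. c k *b \<phi> k (x + y))
        = Sum_any (\<lambda>k. c k *b \<phi> k x) + Sum_any (\<lambda>k. c k *b \<phi> k y)"
      unfolding sum_eq[OF N(1)] sum_eq[OF N(2)] sum_eq[OF N(3)]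
      by (simp add: linear_add[OF lin] vs2.scale_right_distrib sum.distrib)
  next
    fix a x
    obtain N where N: "\<forall>k\<ge>N. \<phi> k x = 0" using trunc by blast
    then have N': "\<forall>k\<ge>N. \<phi> k (a *a x) = 0" by (simp add: linear_scale[OF lin])
    show "Sum_any (\<lambda>k. c k *b \<phi> k (a *a x)) = a *b Sum_any (\<lambda>k. c k *b \<phi> k x)"
      unfolding sum_eq[OF N] sum_eq[OF N']
      by (simp add: linear_scale[OF lin] vs2.scale_sum_right vs2.scale_left_commute mult.commute)
  qed
qed

end

section \<open>Vertex algebras with an automorphism of finite order\<close>

locale vertex_algebra_aut =
  fixes sm :: "complex \<Rightarrow> 'v::ab_group_add \<Rightarrow> 'v" and mode :: "'v \<Rightarrow> int \<Rightarrow> 'v \<Rightarrow> 'v"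
    and vac :: 'v and g :: "'v \<Rightarrow> 'v" and T :: nat
  assumes vertex_algebra: "vertex_algebra sm mode vac"
    and automorphism: "va_automorphism sm mode vac g T"
begin

sublocale V: vector_space sm
  using vertex_algebra by (simp add: vertex_algebra_def)

sublocale VV: vector_space_pair sm sm ..

abbreviation lin :: "('v \<Rightarrow> 'v) \<Rightarrow> bool" where
  "lin \<equiv> Vector_Spaces.linear sm sm"

lemma mode_linear_left: "lin (\<lambda>u. mode u k v)"
  using vertex_algebra by (simp add: vertex_algebra_def)

lemma mode_linear_right: "lin (\<lambda>v. mode u k v)"
  using vertex_algebra by (simp add: vertex_algebra_def)

lemma mode_truncation: "\<exists>N. \<forall>k\<ge>N. mode u k v = 0"
  using vertex_algebra by (simp add: vertex_algebra_def)

lemma vac_mode: "mode vac k v = (if k = -1 then v else 0)"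
  using vertex_algebra by (simp add: vertex_algebra_def)

lemma mode_minus_one_vac: "mode u (-1) vac = u"
  using vertex_algebra by (simp add: vertex_algebra_def)

lemma mode_nonneg_vac: "0 \<le> k \<Longrightarrow> mode u k vac = 0"
  using vertex_algebra by (simp add: vertex_algebra_def)

lemma borcherds:
  "Sum_any (\<lambda>i::nat. sm ((of_int p :: complex) gchoose i) (mode (mode u (r + int i) v) (p + q - int i) w))
 = Sum_any (\<lambda>i::nat. sm ((-1) ^ i * ((of_int r :: complex) gchoose i))
      (mode u (p + r - int i) (mode v (q + int i) w)
       - sm ((-1) powi r) (mode v (q + r - int i) (mode u (p + int i) w))))"
  using vertex_algebra unfolding vertex_algebra_def by blast

lemma mode_zero_left [simp]: "mode 0 k v = 0"
  using VV.linear_0[OF mode_linear_left] .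

lemma mode_zero_right [simp]: "mode u k 0 = 0"
  using VV.linear_0[OF mode_linear_right] .

lemma g_linear: "lin g"
  using automorphism by (simp add: va_automorphism_def)

lemma g_vac: "g vac = vac"
  using automorphism by (simp add: va_automorphism_def)

lemma T_pos: "0 < T"
  using automorphism by (simp add: va_automorphism_def)

lemma funpow_g_T: "(g ^^ T) x = x"
  using automorphism by (simp add: va_automorphism_def)

lemma resY_eq_Sum_any: "resY sm mode a K u v = Sum_any (\<lambda>k. sm (res_coeff a K k) (mode u k v))"
  by (simp add: resY_def res_coeff_def)

lemma resY_linear_left: "lin (\<lambda>u. resY sm mode a K u v)"
  unfolding resY_eq_Sum_any
  by (rule VV.linear_Sum_any_scaled[where L = "min 0 (- K)"])
     (auto simp: mode_linear_left mode_truncation res_coeff_eq_0)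

lemma resY_linear_right: "lin (\<lambda>v. resY sm mode a K u v)"
  unfolding resY_eq_Sum_any
  by (rule VV.linear_Sum_any_scaled[where L = "min 0 (- K)"])
     (auto simp: mode_linear_right mode_truncation res_coeff_eq_0)

lemma resY_vac_left: "resY sm mode a K vac w = sm (res_coeff a K (-1)) w"
  unfolding resY_eq_Sum_any by (subst Sum_any.expand_superset[of "{-1}"]) (auto simp: vac_mode)

lemma proj_eq_root_unity:
  "proj sm g T r u = sm (1 / of_nat T) (\<Sum>j<T. sm (root_unity T r ^ j) ((g ^^ j) u))"
  unfolding proj_def root_unity_def
  by (intro arg_cong[where f = "sm _"] sum.cong refl arg_cong2[where f = sm])
     (simp add: exp_of_nat_mult[symmetric] field_simps)

lemma funpow_g_linear: "lin (g ^^ j)"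
proof (induction j)
  case 0
  show ?case by (simp add: V.linear_ident)
next
  case (Suc j)
  show ?case unfolding funpow.simps(2) by (rule Vector_Spaces.linear_compose[OF Suc g_linear])
qed

lemma proj_linear: "lin (proj sm g T r)"
  unfolding proj_eq_root_unity[abs_def]
  by (intro VV.linear_compose_scale_right VV.linear_compose_sum ballI funpow_g_linear)

lemma g_proj: "r \<le> T \<Longrightarrow> g (proj sm g T r x) = sm (root_unity T (T - r)) (proj sm g T r x)"
proof -
  assume "r \<le> T"
  let ?f = "\<lambda>j. sm (root_unity T r ^ j) ((g ^^ j) x)"
  let ?S = "\<Sum>j<T. ?f j"
  have "sm (root_unity T r) (g ?S) = (\<Sum>j<T. ?f (Suc j))"
    by (simp add: VV.linear_sum[OF g_linear] VV.linear_scale[OF g_linear] V.scale_sum_right mult.commute)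
  also have "\<dots> = ?S"
    by (rule sum_shift_periodic) (simp add: root_unity_power_self[OF T_pos] funpow_g_T)
  finally have eigen: "sm (root_unity T r) (g ?S) = ?S" .
  have "root_unity T (T - r) * root_unity T r = 1"
    using \<open>r \<le> T\<close> root_unity_add[of T "T - r" r] root_unity_self[OF T_pos] by simp
  then have "g ?S = sm (root_unity T (T - r) * root_unity T r) (g ?S)" by simp
  also have "\<dots> = sm (root_unity T (T - r)) ?S"
    by (simp only: V.scale_scale[symmetric] eigen)
  finally show ?thesis
    unfolding proj_eq_root_unity VV.linear_scale[OF g_linear] by (simp add: V.scale_left_commute)
qed

lemma funpow_g_proj:
  "r \<le> T \<Longrightarrow> (g ^^ j) (proj sm g T r x) = sm (root_unity T (T - r) ^ j) (proj sm g T r x)"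
  by (induction j) (simp_all add: g_proj VV.linear_scale[OF g_linear] mult.commute)

lemma proj_proj:
  assumes "r < T" "r' < T"
  shows "proj sm g T r' (proj sm g T r x) = (if r' = r then proj sm g T r x else 0)"
proof -
  let ?y = "proj sm g T r x"
  have "proj sm g T r' ?y = sm (1 / of_nat T * (\<Sum>j<T. root_unity T (r' + (T - r)) ^ j)) ?y"
    unfolding proj_eq_root_unity[of r' ?y] using assms
    by (simp add: funpow_g_proj power_mult_distrib[symmetric] root_unity_add[symmetric]
        V.scale_sum_left[symmetric] del: proj_eq_root_unity)
  also have "\<dots> = (if r' = r then ?y else 0)"
    using T_pos assms by (simp add: sum_root_unity_powers dvd_add_diff_iff_eq del: proj_eq_root_unity)
  finally show ?thesis .
qed

lemma sum_proj: "(\<Sum>r<T. proj sm g T r x) = x"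
proof -
  have "(\<Sum>r<T. proj sm g T r x)
      = sm (1 / of_nat T) (\<Sum>j<T. sm (\<Sum>r<T. root_unity T j ^ r) ((g ^^ j) x))"
    unfolding proj_eq_root_unity V.scale_sum_right[symmetric] V.scale_sum_left
    by (subst sum.swap) (simp add: root_unity_commute)
  also have "\<dots> = sm (1 / of_nat T) (sm (of_nat T) x)"
    using T_pos by (subst sum.mono_neutral_right[of "{..<T}" "{0}"])
      (auto simp: sum_root_unity_powers dest: dvd_imp_le)
  also have "\<dots> = x" using T_pos by simp
  finally show ?thesis .
qed

lemma funpow_g_vac: "(g ^^ j) vac = vac"
  by (induction j) (simp_all add: g_vac)

lemma proj_vac: "r < T \<Longrightarrow> proj sm g T r vac = (if r = 0 then vac else 0)"
  using T_pos by (auto simp: proj_eq_root_unity funpow_g_vac V.scale_sum_left[symmetric]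
      sum_root_unity_powers dest: dvd_imp_le)

definition transl :: "'v \<Rightarrow> 'v" where
  "transl u = mode u (-2) vac"

text \<open>The Borcherds identity for \<open>(u, vac, w)\<close> at \<open>q = 0, r = -2\<close>: its right side vanishes,
  and on the left only the terms with \<open>u_(-2) vac = transl u\<close> and \<open>u_(-1) vac = u\<close> survive.\<close>

lemma mode_transl: "mode (transl u) p w = - sm (of_int p) (mode u (p - 1) w)"
proof -
  let ?lhs = "\<lambda>i::nat. sm ((of_int p :: complex) gchoose i) (mode (mode u (-2 + int i) vac) (p + 0 - int i) w)"
  have "Sum_any ?lhs = (\<Sum>i\<in>{0, 1}. ?lhs i)"
  proof (rule Sum_any.expand_superset)
    show "{i. ?lhs i \<noteq> 0} \<subseteq> {0, 1}"
    proof (rule subsetI, rule ccontr)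
      fix i assume "i \<in> {i. ?lhs i \<noteq> 0}" "i \<notin> {0, 1}"
      then show False by (simp add: mode_nonneg_vac)
    qed
  qed simp
  moreover have "Sum_any ?lhs = 0"
    using borcherds[of p u "-2" vac 0 w] by (simp add: vac_mode)
  ultimately have "mode (transl u) p w + sm (of_int p) (mode u (p - 1) w) = 0"
    by (simp add: transl_def mode_minus_one_vac)
  then show ?thesis by (simp add: eq_neg_iff_add_eq_0)
qed

lemma funpow_transl: "(transl ^^ j) u = sm (fact j) (mode u (- int j - 1) vac)"
proof (induction j arbitrary: u)
  case 0
  then show ?case by (simp add: mode_minus_one_vac)
next
  case (Suc j)
  have "(transl ^^ Suc j) u = (transl ^^ j) (transl u)"
    by (simp add: funpow_Suc_right del: funpow.simps)
  also have "\<dots> = sm (fact (Suc j)) (mode u (- int (Suc j) - 1) vac)"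
    by (simp add: Suc mode_transl algebra_simps)
  finally show ?case .
qed

text \<open>This is \<open>Y(x, z) vac = e^(z transl) x\<close> at \<open>z = log (1 + y)\<close>.\<close>

lemma resY_vac_right:
  assumes "1 \<le> K"
  shows "resY sm mode a K x vac
     = (\<Sum>j=0..nat (K - 1). sm ((fps_binomial a * fps_ln 1 ^ j) $ nat (K - 1) / fact j) ((transl ^^ j) x))"
proof -
  have "resY sm mode a K x vac = (\<Sum>k=min 0 (- K)..<0. sm (res_coeff a K k) (mode x k vac))"
    unfolding resY_eq_Sum_any
    by (rule Sum_any_eq_sum_atLeastLessThan) (simp_all add: res_coeff_eq_0 mode_nonneg_vac)
  also have "\<dots> = (\<Sum>j=0..nat (K - 1). sm (res_coeff a K (- int j - 1)) (mode x (- int j - 1) vac))"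
    using assms
    by (intro sum.reindex_bij_witness[of _ "\<lambda>j. - int j - 1" "\<lambda>k. nat (- k - 1)"]) auto
  also have "\<dots> = (\<Sum>j=0..nat (K - 1).
      sm ((fps_binomial a * fps_ln 1 ^ j) $ nat (K - 1) / fact j) ((transl ^^ j) x))"
    using assms by (simp add: res_coeff_neg funpow_transl)
  finally show ?thesis .
qed

abbreviation L :: "nat \<Rightarrow> nat \<Rightarrow> 'v set" where
  "L \<equiv> Lnm sm mode vac T"

text \<open>\<open>n - m\<close>, the eigenvalue of \<open>transl\<close> modulo \<open>L N M\<close>.\<close>

definition n_minus_m :: "nat \<Rightarrow> nat \<Rightarrow> complex" where
  "n_minus_m N M = (of_nat N - of_nat M) / of_nat T"

lemma transl_mod_L: "transl x - sm (n_minus_m N M) x \<in> L N M"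
proof -
  have "transl x - sm (n_minus_m N M) x = mode x (-2) vac + sm ((of_nat M - of_nat N) / of_nat T) x"
    by (simp add: transl_def n_minus_m_def diff_divide_distrib V.scale_left_diff_distrib)
  then show ?thesis by (auto simp: Lnm_def intro!: V.span_base)
qed

lemma funpow_transl_mod_L: "(transl ^^ j) x - sm (n_minus_m N M ^ j) x \<in> L N M"
proof (induction j)
  case 0
  then show ?case by (simp add: Lnm_def V.span_zero)
next
  case (Suc j)
  let ?y = "(transl ^^ j) x"
  have "(transl ^^ Suc j) x - sm (n_minus_m N M ^ Suc j) x
      = (transl ?y - sm (n_minus_m N M) ?y) + sm (n_minus_m N M) (?y - sm (n_minus_m N M ^ j) x)"
    by (simp add: V.scale_right_diff_distrib)
  also have "\<dots> \<in> L N M"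
    using transl_mod_L Suc unfolding Lnm_def by (intro V.span_add V.span_scale)
  finally show ?case .
qed

lemma resY_vac_right_mod_L:
  assumes "1 \<le> K"
  shows "resY sm mode a K x vac - sm ((a + n_minus_m N M) gchoose nat (K - 1)) x \<in> L N M"
proof -
  let ?n = "nat (K - 1)"
  let ?c = "\<lambda>j. (fps_binomial a * fps_ln 1 ^ j) $ ?n / fact j"
  have "resY sm mode a K x vac - sm ((a + n_minus_m N M) gchoose ?n) x
      = (\<Sum>j=0..?n. sm (?c j) ((transl ^^ j) x - sm (n_minus_m N M ^ j) x))"
    unfolding resY_vac_right[OF assms] gbinomial_add_eq_sum_ln_powers V.scale_sum_left
    by (simp add: V.scale_right_diff_distrib sum_subtractf mult_ac)
  also have "\<dots> \<in> L N M"
    using funpow_transl_mod_L unfolding Lnm_def by (intro V.span_sum V.span_scale)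
  finally show ?thesis .
qed

section \<open>The products and their units\<close>

abbreviation residue_match :: "nat \<Rightarrow> nat \<Rightarrow> nat \<Rightarrow> bool" where
  "residue_match r P N \<equiv> (int (P mod T) - int (N mod T)) mod int T = int r mod int T"

abbreviation bul :: "nat \<Rightarrow> nat \<Rightarrow> nat \<Rightarrow> 'v \<Rightarrow> 'v \<Rightarrow> 'v" where
  "bul \<equiv> bullet sm mode g T"

lemma bullet_hom_linear_left: "lin (\<lambda>u. bullet_hom sm mode T r M P N u v)"
  unfolding bullet_hom_def Let_def
  by (cases "residue_match r P N")
     (simp_all add: VV.linear_zero VV.linear_compose_sum VV.linear_compose_scale_right resY_linear_left)

lemma bullet_hom_linear_right: "lin (\<lambda>v. bullet_hom sm mode T r M P N u v)"
  unfolding bullet_hom_def Let_def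
  by (cases "residue_match r P N")
     (simp_all add: VV.linear_zero VV.linear_compose_sum VV.linear_compose_scale_right resY_linear_right)

lemma bullet_linear_left: "lin (\<lambda>u. bul M P N u v)"
  unfolding bullet_def
  using Vector_Spaces.linear_compose[OF proj_linear bullet_hom_linear_left]
  by (intro VV.linear_compose_sum) (simp add: o_def)

lemma bullet_linear_right: "lin (\<lambda>v. bul M P N u v)"
  unfolding bullet_def by (intro VV.linear_compose_sum ballI bullet_hom_linear_right)

lemma diamond_hom_linear_left: "lin (\<lambda>u. diamond_hom sm mode T r M N u v)"
  unfolding diamond_hom_def Let_def by (rule resY_linear_left)

lemma bullet_hom_vac_left: "bullet_hom sm mode T 0 M N N vac w = w"
proof -
  have "delta (M mod T) 0 = 1" "delta (N mod T) T = 0"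
    using T_pos by (simp_all add: delta_def not_le)
  then have "bullet_hom sm mode T 0 M N N vac w =
     (\<Sum>i=0..N div T. sm ((-1) ^ i * ((of_int (int (M div T) + int i) :: complex) gchoose i)
        * (of_nat (M div T) gchoose (M div T + i))) w)"
    unfolding bullet_hom_def Let_def by (simp add: resY_vac_left res_coeff_minus_one nat_add_distrib)
  also have "\<dots> = w"
    by (subst sum.mono_neutral_right[of "{0..N div T}" "{0}"])
       (auto simp flip: binomial_gbinomial simp: binomial_eq_0)
  finally show ?thesis .
qed

lemma bullet_vac_left: "bul M N N vac w = w"
proof -
  have "bul M N N vac w = (\<Sum>r<T. if r = 0 then bullet_hom sm mode T 0 M N N vac w else 0)"
    unfolding bullet_def
    by (intro sum.cong refl) (auto simp: proj_vac VV.linear_0[OF bullet_hom_linear_left])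
  then show ?thesis using T_pos by (simp add: bullet_hom_vac_left)
qed

lemma add_n_minus_m:
  "(-1 + of_int e + of_nat r / of_nat T) + n_minus_m N M
     = of_int (int T * (e - 1) + int r + int N - int M) / of_nat T"
  using T_pos by (simp add: n_minus_m_def field_simps)

text \<open>Under the residue condition \<open>bullet_hom\<close> collapses modulo \<open>L N M\<close> to its \<open>i = 0\<close> term,
  because the binomial coefficients become \<open>Y choose (Y + i)\<close> for an integer \<open>Y \<ge> 0\<close>.\<close>

lemma bullet_hom_vac_right_mod_L:
  assumes "r < T" and "residue_match r M N"
  shows "bullet_hom sm mode T r M M N x vac - x \<in> L N M"
proof -
  define fm fn dm dn where "fm = int (M div T)" and "fn = int (N div T)"
    and "dm = delta (M mod T) r" and "dn = delta (N mod T) (T - r)"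
  define a where "a = -1 + of_int fm + of_int dm + of_nat r / (of_nat T :: complex)"
  define K where "K i = fn + dm + dn + int i" for i :: nat
  define c where "c i = (-1) ^ i * ((of_int (fn - 1 + dm + dn + int i) :: complex) gchoose i)" for i :: nat
  define Y where "Y = fn + dm + dn - 1"
  have E: "int r + int (N mod T) - int (M mod T) = int T * dn" "dm + dn \<ge> 1"
    unfolding dm_def dn_def using residue_class_delta assms T_pos by auto
  then have "Y \<ge> 0" by (simp add: Y_def fn_def)
  have "int T * (fm + dm - 1) + int r + int N - int M = int T * Y"
    using E int_div_mod_decomp[of N T] int_div_mod_decomp[of M T]
    by (simp add: Y_def fm_def fn_def algebra_simps)
  then have aY: "a + n_minus_m N M = of_int Y"
    using add_n_minus_m[of "fm + dm" r N M] T_pos by (simp add: a_def algebra_simps)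
  have K: "1 \<le> K i" "nat (K i - 1) = nat Y + i" for i
    using E \<open>Y \<ge> 0\<close> by (simp_all add: K_def Y_def fn_def)
  have gchoose_Y: "(a + n_minus_m N M) gchoose nat (K i - 1) = (if i = 0 then 1 else 0)" for i
  proof -
    have "(of_int Y :: complex) = of_nat (nat Y)" using \<open>Y \<ge> 0\<close> by simp
    then show ?thesis
      unfolding aY K(2) by (simp add: binomial_gbinomial[symmetric] binomial_eq_0)
  qed
  have "bullet_hom sm mode T r M M N x vac = (\<Sum>i=0..M div T. sm (c i) (resY sm mode a (K i) x vac))"
    using assms(2) unfolding bullet_hom_def Let_def
    by (simp add: a_def K_def c_def fm_def fn_def dm_def dn_def)
  moreover have "(\<Sum>i=0..M div T. sm (c i) (sm ((a + n_minus_m N M) gchoose nat (K i - 1)) x)) = x"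
    by (subst sum.mono_neutral_right[of _ "{0}"]) (auto simp: gchoose_Y c_def)
  ultimately have "bullet_hom sm mode T r M M N x vac - x
      = (\<Sum>i=0..M div T. sm (c i) (resY sm mode a (K i) x vac
           - sm ((a + n_minus_m N M) gchoose nat (K i - 1)) x))"
    by (simp add: V.scale_right_diff_distrib sum_subtractf)
  also have "\<dots> \<in> L N M"
    using resY_vac_right_mod_L[OF K(1)] unfolding Lnm_def by (intro V.span_sum V.span_scale)
  finally show ?thesis .
qed

text \<open>Without the residue condition, \<open>a + (n - m)\<close> is not an integer, so \<open>diamond_hom\<close> is a
  nonzero multiple of the identity modulo \<open>L N M\<close>.\<close>

lemma diamond_hom_vac_right_mod_L:
  assumes "r < T" and "\<not> residue_match r M N"
  obtains s where "s \<noteq> 0" and "\<And>x. diamond_hom sm mode T r M N x vac - sm s x \<in> L N M"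
proof
  define fm fn dm dn where "fm = int (M div T)" and "fn = int (N div T)"
    and "dm = delta (M mod T) r" and "dn = delta (N mod T) (T - r)"
  define a where "a = -1 + of_int dm + of_int fm + of_nat r / (of_nat T :: complex)"
  define K where "K = fm + fn + dm + dn + 1"
  show "(a + n_minus_m N M) gchoose nat (K - 1) \<noteq> 0"
  proof (rule gbinomial_nonzero_if_not_int, rule notI)
    assume "a + n_minus_m N M \<in> \<int>"
    then obtain z where "a + n_minus_m N M = of_int z" by (auto elim: Ints_cases)
    then have "(of_int (int T * (fm + dm - 1) + int r + int N - int M) :: complex) = of_int (int T * z)"
      using add_n_minus_m[of "dm + fm" r N M] T_pos by (simp add: a_def field_simps)
    then have "int r + int N - int M = int T * (z - fm - dm + 1)"
      by (simp only: of_int_eq_iff) (simp add: algebra_simps)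
    with assms(2) show False using residue_class_of_multiple by blast
  qed
  have "1 \<le> K" by (simp add: K_def fm_def fn_def dm_def dn_def delta_def)
  moreover have "diamond_hom sm mode T r M N x vac = resY sm mode a K x vac" for x
    by (simp add: diamond_hom_def Let_def a_def K_def fm_def fn_def dm_def dn_def)
  ultimately show "diamond_hom sm mode T r M N x vac - sm ((a + n_minus_m N M) gchoose nat (K - 1)) x \<in> L N M"
    for x using resY_vac_right_mod_L by simp
qed

section \<open>The subspace \<open>O_{g,n,m}(V)\<close>\<close>

lemma bullet_diff_left: "bul M P N (x - y) v = bul M P N x v - bul M P N y v"
  by (rule VV.linear_diff[OF bullet_linear_left])

lemma bullet_add_right: "bul M P N u (x + y) = bul M P N u x + bul M P N u y"
  by (rule VV.linear_add[OF bullet_linear_right])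

lemma bullet_diff_right: "bul M P N u (x - y) = bul M P N u x - bul M P N u y"
  by (rule VV.linear_diff[OF bullet_linear_right])

definition assoc :: "nat \<Rightarrow> nat \<Rightarrow> nat \<Rightarrow> nat \<Rightarrow> 'v \<Rightarrow> 'v \<Rightarrow> 'v \<Rightarrow> 'v" where
  "assoc M P1 P2 N a b c = bul M P1 N (bul P1 P2 N a b) c - bul M P2 N a (bul M P1 P2 b c)"

abbreviation O'_nm :: "nat \<Rightarrow> nat \<Rightarrow> 'v set" where
  "O'_nm \<equiv> O1 sm mode vac g T"

abbreviation O_nm :: "nat \<Rightarrow> nat \<Rightarrow> 'v set" where
  "O_nm \<equiv> Onm sm mode vac g T"

definition O_gens :: "nat \<Rightarrow> nat \<Rightarrow> 'v set" where
  "O_gens N M =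
     {diamond sm mode g T M N u v | u v. True}
   \<union> {mode u (-2) vac + sm ((of_nat M - of_nat N) / of_nat T) u | u. True}
   \<union> {bul M P3 N u (assoc M P1 P2 P3 a b c) | u a b c P1 P2 P3. True}
   \<union> {bul M P1 N (bul P1 P2 N a x) b | a b x P1 P2. x \<in> O'_nm P2 P1}"

lemma O'_eq_span:
  "O'_nm N M = V.span ({diamond sm mode g T M N u v | u v. True}
     \<union> {mode u (-2) vac + sm ((of_nat M - of_nat N) / of_nat T) u | u. True})"
  unfolding O1_def Lnm_def V.span_Un by simp

lemma O_eq_span: "O_nm N M = V.span (O_gens N M)"
  unfolding Onm_def O'_eq_span O2_def O3_def O_gens_def V.span_Un assoc_def by blast

lemma O_subspace: "V.subspace (O_nm N M)"
  unfolding O_eq_span by (rule V.subspace_span)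

lemmas O_zero = V.subspace_0[OF O_subspace]
  and O_add = V.subspace_add[OF O_subspace]
  and O_diff = V.subspace_diff[OF O_subspace]
  and O_scale = V.subspace_scale[OF O_subspace]

lemma O_base: "x \<in> O_gens N M \<Longrightarrow> x \<in> O_nm N M"
  unfolding O_eq_span by (rule V.span_base)

lemma O'_in_O: "x \<in> O'_nm N M \<Longrightarrow> x \<in> O_nm N M"
  unfolding O_eq_span O'_eq_span by (rule subsetD[OF V.span_mono, rotated]) (auto simp: O_gens_def)

lemma L_in_O: "x \<in> L N M \<Longrightarrow> x \<in> O_nm N M"
  by (rule O'_in_O) (force simp: O1_def intro: V.span_zero)

lemma diamond_mem_O: "diamond sm mode g T M N u v \<in> O_nm N M"
  by (rule O_base) (unfold O_gens_def, blast)

lemma bullet_assoc_mem_O: "bul M P3 N u (assoc M P1 P2 P3 a b c) \<in> O_nm N M"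
  by (rule O_base) (unfold O_gens_def, blast)

lemma bullet_bullet_O'_mem_O: "x \<in> O'_nm P2 P1 \<Longrightarrow> bul M P1 N (bul P1 P2 N a x) b \<in> O_nm N M"
  by (rule O_base) (unfold O_gens_def, blast)

lemma assoc_mem_O: "assoc M P1 P2 N a b c \<in> O_nm N M"
  using bullet_assoc_mem_O[of M N N vac] by (simp only: bullet_vac_left)

lemma linear_image_O:
  assumes "lin f" and "\<And>x. x \<in> O_gens N M \<Longrightarrow> f x \<in> O_nm N M" and "w \<in> O_nm N M"
  shows "f w \<in> O_nm N M"
proof -
  have "V.span (O_gens N M) \<subseteq> {x. f x \<in> O_nm N M}"
    using assms(2) VV.linear_subspace_linear_preimage[OF assms(1) O_subspace]
    by (intro V.span_minimal) auto
  with assms(3) show ?thesis unfolding O_eq_span by blast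
qed

lemma proj_mem_O:
  assumes "r < T" and "\<not> residue_match r M N"
  shows "proj sm g T r w \<in> O_nm N M"
proof -
  obtain s where s: "s \<noteq> 0" "\<And>x. diamond_hom sm mode T r M N x vac - sm s x \<in> L N M"
    using diamond_hom_vac_right_mod_L[OF assms] by blast
  let ?y = "proj sm g T r w"
  have "diamond sm mode g T M N ?y vac = (\<Sum>r'<T. if r' = r then diamond_hom sm mode T r M N ?y vac else 0)"
    unfolding diamond_def
    using assms(1) proj_proj[OF assms(1)] VV.linear_0[OF diamond_hom_linear_left]
    by (intro sum.cong) auto
  also have "\<dots> = diamond_hom sm mode T r M N ?y vac" using assms(1) by simp
  finally have "sm s ?y = diamond sm mode g T M N ?y vac - (diamond_hom sm mode T r M N ?y vac - sm s ?y)"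
    by simp
  also have "\<dots> \<in> O_nm N M"
    using diamond_mem_O L_in_O[OF s(2)] by (rule O_diff)
  finally have "sm (1 / s) (sm s ?y) \<in> O_nm N M" by (rule O_scale)
  with s(1) show ?thesis by simp
qed

lemma bullet_vac_right_mod_O: "bul M M N w vac - w \<in> O_nm N M"
proof -
  have "bul M M N w vac - w = (\<Sum>r<T. bullet_hom sm mode T r M M N (proj sm g T r w) vac - proj sm g T r w)"
    unfolding bullet_def sum_subtractf sum_proj ..
  also have "\<dots> \<in> O_nm N M"
  proof (rule V.subspace_sum[OF O_subspace])
    fix r assume "r \<in> {..<T}"
    then have r: "r < T" by simp
    show "bullet_hom sm mode T r M M N (proj sm g T r w) vac - proj sm g T r w \<in> O_nm N M"
    proof (cases "residue_match r M N")
      case True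
      then show ?thesis using L_in_O[OF bullet_hom_vac_right_mod_L[OF r]] by blast
    next
      case False
      then show ?thesis using O_diff[OF O_zero proj_mem_O[OF r False]] by (simp add: bullet_hom_def)
    qed
  qed
  finally show ?thesis .
qed

lemma bullet_O'_left: "x \<in> O'_nm N P \<Longrightarrow> bul M P N x w \<in> O_nm N M"
  using bullet_bullet_O'_mem_O[of x N P M N vac w] by (simp only: bullet_vac_left)

lemma bullet_O'_right:
  assumes "x \<in> O'_nm P M"
  shows "bul M P N a x \<in> O_nm N M"
proof -
  have "bul M P N a x = bul M M N (bul M P N a x) vac - (bul M M N (bul M P N a x) vac - bul M P N a x)"
    by simp
  also have "\<dots> \<in> O_nm N M"
    using bullet_bullet_O'_mem_O[OF assms] bullet_vac_right_mod_O by (rule O_diff)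
  finally show ?thesis .
qed

lemma bullet_left_closed:
  assumes "w \<in> O_nm N M"
  shows "bul M N N u w \<in> O_nm N M"
  using bullet_linear_right _ assms
proof (rule linear_image_O)
  fix y assume "y \<in> O_gens N M"
  then consider "y \<in> O'_nm N M"
    | u' a b c P1 P2 P3 where "y = bul M P3 N u' (assoc M P1 P2 P3 a b c)"
    | a b x P1 P2 where "y = bul M P1 N (bul P1 P2 N a x) b" "x \<in> O'_nm P2 P1"
    unfolding O_gens_def O'_eq_span by (blast intro: V.span_base)
  then show "bul M N N u y \<in> O_nm N M"
  proof cases
    case 1
    then show ?thesis by (rule bullet_O'_right)
  next
    case (2 u' a b c P1 P2 P3)
    let ?X = "assoc M P1 P2 P3 a b c"
    have "bul M N N u y = bul M P3 N (bul P3 N N u u') ?X - assoc M P3 N N u u' ?X"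
      by (simp add: 2 assoc_def)
    also have "\<dots> \<in> O_nm N M"
      by (intro O_diff bullet_assoc_mem_O assoc_mem_O)
    finally show ?thesis .
  next
    case (3 a b x P1 P2)
    let ?W = "bul M P1 P2 x b" and ?a = "bul P2 N N u a"
    have "bul M N N u y = bul M N N u (assoc M P1 P2 N a x b)
        + (bul M P1 N (bul P1 P2 N ?a x) b - assoc M P1 P2 N ?a x b - assoc M P2 N N u a ?W)"
      by (simp add: 3 assoc_def bullet_add_right bullet_diff_right)
    also have "\<dots> \<in> O_nm N M"
      by (intro O_add O_diff bullet_assoc_mem_O assoc_mem_O bullet_bullet_O'_mem_O 3)
    finally show ?thesis .
  qed
qed

lemma bullet_right_assoc_mem_O: "bul M M N (bul M P3 N u (assoc M P1 P2 P3 a b c)) v \<in> O_nm N M"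
proof -
  define A Bc c' where "A = bul P1 P2 P3 a b" and "Bc = bul M P1 P2 b c" and "c' = bul M M P1 c v"
  have "bul M M P3 (assoc M P1 P2 P3 a b c) v
      = assoc M M P1 P3 A c v - assoc M M P2 P3 a Bc v + assoc M P1 P2 P3 a b c'
        - bul M P2 P3 a (assoc M M P1 P2 b c v)"
    by (simp add: assoc_def A_def Bc_def c'_def bullet_diff_left bullet_diff_right)
  then have "bul M M N (bul M P3 N u (assoc M P1 P2 P3 a b c)) v
      = assoc M M P3 N u (assoc M P1 P2 P3 a b c) v
        + (bul M P3 N u (assoc M M P1 P3 A c v) - bul M P3 N u (assoc M M P2 P3 a Bc v)
           + bul M P3 N u (assoc M P1 P2 P3 a b c')
           - (bul M P2 N (bul P2 P3 N u a) (assoc M M P1 P2 b c v) - assoc M P2 P3 N u a (assoc M M P1 P2 b c v)))"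
    by (simp add: assoc_def bullet_add_right bullet_diff_right)
  also have "\<dots> \<in> O_nm N M"
    by (intro O_add O_diff assoc_mem_O bullet_assoc_mem_O)
  finally show ?thesis .
qed

lemma bullet_right_closed:
  assumes "w \<in> O_nm N M"
  shows "bul M M N w v \<in> O_nm N M"
  using bullet_linear_left _ assms
proof (rule linear_image_O)
  fix y assume "y \<in> O_gens N M"
  then consider "y \<in> O'_nm N M"
    | u a b c P1 P2 P3 where "y = bul M P3 N u (assoc M P1 P2 P3 a b c)"
    | a b x P1 P2 where "y = bul M P1 N (bul P1 P2 N a x) b" "x \<in> O'_nm P2 P1"
    unfolding O_gens_def O'_eq_span by (blast intro: V.span_base)
  then show "bul M M N y v \<in> O_nm N M"
  proof cases
    case 1
    then show ?thesis by (rule bullet_O'_left)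
  next
    case 2
    then show ?thesis by (simp only: bullet_right_assoc_mem_O)
  next
    case (3 a b x P1 P2)
    let ?Z = "bul P1 P2 N a x"
    have "bul M M N y v = assoc M M P1 N ?Z b v + bul M P1 N ?Z (bul M M P1 b v)"
      by (simp add: 3 assoc_def)
    also have "\<dots> \<in> O_nm N M"
      by (intro O_add assoc_mem_O bullet_bullet_O'_mem_O 3)
    finally show ?thesis .
  qed
qed

end

theorem theorem3p8:
  fixes sm :: "complex \<Rightarrow> 'v::ab_group_add \<Rightarrow> 'v"
    and mode :: "'v \<Rightarrow> int \<Rightarrow> 'v \<Rightarrow> 'v"
    and vac :: 'v and g :: "'v \<Rightarrow> 'v" and T N M :: nat
  assumes VA: "vertex_algebra sm mode vac"
    and aut: "va_automorphism sm mode vac g T"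
  defines "Obig \<equiv> Onm sm mode vac g T N M"
    and "lact \<equiv> bullet sm mode g T M N N"
    and "ract \<equiv> bullet sm mode g T M M N"
    and "prodN \<equiv> bullet sm mode g T N N N"
    and "prodM \<equiv> bullet sm mode g T M M M"
  shows
    "(\<forall>w. Vector_Spaces.linear sm sm (\<lambda>u. lact u w))
   \<and> (\<forall>u. Vector_Spaces.linear sm sm (\<lambda>w. lact u w))
   \<and> (\<forall>v. Vector_Spaces.linear sm sm (\<lambda>w. ract w v))
   \<and> (\<forall>w. Vector_Spaces.linear sm sm (\<lambda>v. ract w v))
   \<and> (\<forall>u w. u \<in> On sm mode vac g T N \<longrightarrow> lact u w \<in> Obig)
   \<and> (\<forall>u w. w \<in> Obig \<longrightarrow> lact u w \<in> Obig)
   \<and> (\<forall>w v. w \<in> Obig \<longrightarrow> ract w v \<in> Obig)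
   \<and> (\<forall>w v. v \<in> On sm mode vac g T M \<longrightarrow> ract w v \<in> Obig)
   \<and> (\<forall>u u' w. lact (prodN u u') w - lact u (lact u' w) \<in> Obig)
   \<and> (\<forall>w. lact vac w - w \<in> Obig)
   \<and> (\<forall>w v v'. ract (ract w v) v' - ract w (prodM v v') \<in> Obig)
   \<and> (\<forall>w. ract w vac - w \<in> Obig)
   \<and> (\<forall>u w v. ract (lact u w) v - lact u (ract w v) \<in> Obig)"
proof -
  interpret vertex_algebra_aut sm mode vac g T
    using VA aut by (rule vertex_algebra_aut.intro)
  have assoc_diff: "bul M P1 N (bul P1 P2 N a b) c - bul M P2 N a (bul M P1 P2 b c) \<in> Obig"
    for P1 P2 a b c
    using assoc_mem_O unfolding Obig_def assoc_def .
  show ?thesis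
    unfolding Obig_def lact_def ract_def prodN_def prodM_def On_def
    using bullet_linear_left bullet_linear_right bullet_O'_left bullet_O'_right
      bullet_left_closed bullet_right_closed assoc_diff[unfolded Obig_def]
      bullet_vac_left bullet_vac_right_mod_O O_zero
    by simp
qed

end
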